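(* The special monoid $\Pi_2=\langle a,b,c\mid (ab^ic)^2=1\ (i\geq 1)\rangle$ has context-free word problem, and its group of units is not finitely generated.
   Context: For a monoid $M$ with finite generating set $A$, the word problem of $M$ with respect to $A$ is the language $\{u\#v^{\mathrm{rev}} \mid u,v\in A^\ast,\ u=_M v\}$, where $\#\notin A$ and $v^{\mathrm{rev}}$ is the reversal of $v$; $M$ has context-free word problem if this language is context-free. The group of units of $M$ is the set of elements having both a left and a right inverse. A monoid is special if it has a presentation in which all defining relations are of the form $w=1$. *)

theory Defs
  imports "HOL-Algebra.Generated_Groups"
begin

inductive_set pres_cong :: "('a list \<times> 'a list) set \<Rightarrow> ('a list \<times> 'a list) set"
  for R where
  base: "(l, r) \<in> R \<Longrightarrow> (u @ l @ v, u @ r @ v) \<in> pres_cong R"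
| refl: "(w, w) \<in> pres_cong R"
| sym: "(x, y) \<in> pres_cong R \<Longrightarrow> (y, x) \<in> pres_cong R"
| trans: "(x, y) \<in> pres_cong R \<Longrightarrow> (y, z) \<in> pres_cong R \<Longrightarrow> (x, z) \<in> pres_cong R"

definition pres_monoid :: "('a list \<times> 'a list) set \<Rightarrow> 'a list set monoid" where
  "pres_monoid R = \<lparr> carrier = UNIV // pres_cong R,
     mult = (\<lambda>X Y. pres_cong R `` {(SOME x. x \<in> X) @ (SOME y. y \<in> Y)}),
     one = pres_cong R `` {[]} \<rparr>"

definition cfg_step :: "(nat \<times> (nat + 't) list) set \<Rightarrow> ((nat + 't) list \<times> (nat + 't) list) set" where
  "cfg_step P = {(u @ [Inl A] @ v, u @ w @ v) | u v A w. (A, w) \<in> P}"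

definition context_free :: "'t list set \<Rightarrow> bool" where
  "context_free L \<longleftrightarrow> (\<exists>(P :: (nat \<times> (nat + 't) list) set) S. finite P \<and>
      L = {w. ([Inl S], map Inr w) \<in> (cfg_step P)\<^sup>*})"

datatype 'a wsym = Gen 'a | Hash

definition word_problem :: "('a list \<times> 'a list) set \<Rightarrow> 'a wsym list set" where
  "word_problem R = {map Gen u @ [Hash] @ rev (map Gen v) | u v. (u, v) \<in> pres_cong R}"

datatype abc = a | b | c

definition Pi2_rels :: "(abc list \<times> abc list) set" where
  "Pi2_rels = {(([a] @ replicate i b @ [c]) @ ([a] @ replicate i b @ [c]), []) | i. i \<ge> 1}"

end

theory Submission
  imports Defs
begin

text \<open>The relators \<open>(ab\<^sup>ic)\<^sup>2\<close> overlap only in a common factor \<open>ab\<^sup>ic\<close>, and both ways of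
  cancelling such an overlap agree; hence cancelling relators greedily while reading a word from
  left to right computes a normal form. The words equal to \<open>1\<close> are exactly the concatenations of
  words \<open>a m c\<close> where \<open>m\<close> is \<open>b\<^sup>jcab\<^sup>j\<close> (\<open>j \<ge> 1\<close>) with words equal to \<open>1\<close> inserted anywhere.
  This is a context-free description, and a grammar that matches \<open>u\<close> against \<open>v\<^sup>r\<^sup>e\<^sup>v\<close> letter by
  letter while inserting words equal to \<open>1\<close> on either side of \<open>#\<close> generates the word problem.

  The reduced word representing a right invertible element is a product of proper prefixes
  \<open>ab\<^sup>i\<close> and \<open>ab\<^sup>kc\<close> of relators; by the anti-automorphism reversing words and swapping \<open>a\<close> and \<open>c\<close>,
  the reduced word of a left invertible element is a product of factors \<open>b\<^sup>ic\<close> and \<open>ab\<^sup>kc\<close>. So the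
  reduced word of a unit is a product of the involutions \<open>ab\<^sup>kc\<close> (\<open>k \<ge> 1\<close>), and multiplying two such
  products only cancels adjacent equal factors. Therefore the units generated by a finite set only
  involve factors \<open>ab\<^sup>kc\<close> with bounded \<open>k\<close>, and miss \<open>ab\<^sup>Nc\<close> for large \<open>N\<close>.\<close>

lemma pres_cong_append_context:
  "(x, x') \<in> pres_cong R \<Longrightarrow> (u @ x @ v, u @ x' @ v) \<in> pres_cong R"
proof (induction rule: pres_cong.induct)
  case (base l r u' v')
  then show ?case using pres_cong.base[of l r R "u @ u'" "v' @ v"] by simp
qed (blast intro: pres_cong.intros)+

lemma pres_cong_append:
  "(x, x') \<in> pres_cong R \<Longrightarrow> (y, y') \<in> pres_cong R \<Longrightarrow> (x @ y, x' @ y') \<in> pres_cong R"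
  using pres_cong_append_context[of x x' R "[]" y] pres_cong_append_context[of y y' R x' "[]"]
  by (auto intro: pres_cong.trans)

lemma equiv_pres_cong: "equiv UNIV (pres_cong R)"
  unfolding equiv_def refl_on_def sym_def trans_def
  by (auto intro: pres_cong.refl pres_cong.sym pres_cong.trans)

definition pres_class :: "('a list \<times> 'a list) set \<Rightarrow> 'a list \<Rightarrow> 'a list set" where
  "pres_class R u = pres_cong R `` {u}"

lemma pres_class_eq_iff: "pres_class R u = pres_class R v \<longleftrightarrow> (u, v) \<in> pres_cong R"
  unfolding pres_class_def using equiv_class_eq_iff[OF equiv_pres_cong] by auto

lemma carrier_pres_monoid: "carrier (pres_monoid R) = range (pres_class R)"
  by (auto simp: pres_monoid_def pres_class_def quotient_def)

lemma pres_class_some: "(u, SOME x. x \<in> pres_class R u) \<in> pres_cong R"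
proof -
  have "u \<in> pres_class R u" by (simp add: pres_class_def pres_cong.refl)
  then have "(SOME x. x \<in> pres_class R u) \<in> pres_class R u" by (rule someI)
  then show ?thesis by (simp add: pres_class_def)
qed

lemma pres_class_mult:
  "pres_class R u \<otimes>\<^bsub>pres_monoid R\<^esub> pres_class R v = pres_class R (u @ v)"
proof -
  have "((SOME x. x \<in> pres_class R u) @ (SOME x. x \<in> pres_class R v), u @ v) \<in> pres_cong R"
    using pres_cong_append[OF pres_class_some[THEN pres_cong.sym]
        pres_class_some[THEN pres_cong.sym]] .
  then have "pres_class R ((SOME x. x \<in> pres_class R u) @ (SOME x. x \<in> pres_class R v))
      = pres_class R (u @ v)"
    by (simp only: pres_class_eq_iff)
  then show ?thesis by (simp add: pres_monoid_def pres_class_def)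
qed

lemma pres_monoid_one: "\<one>\<^bsub>pres_monoid R\<^esub> = pres_class R []"
  by (simp add: pres_monoid_def pres_class_def)

lemma monoid_pres_monoid: "monoid (pres_monoid R)"
  by (rule monoidI) (auto simp: carrier_pres_monoid pres_class_mult pres_monoid_one)

lemma cfg_step_append_context:
  "(x, y) \<in> cfg_step P \<Longrightarrow> (u @ x @ v, u @ y @ v) \<in> cfg_step P"
  unfolding cfg_step_def by (clarify, intro CollectI exI[of _ "u @ _"] exI[of _ "_ @ v"]) auto

lemma cfg_steps_append_context:
  "(x, y) \<in> (cfg_step P)\<^sup>* \<Longrightarrow> (u @ x @ v, u @ y @ v) \<in> (cfg_step P)\<^sup>*"
  by (induction rule: rtrancl_induct)
    (auto intro: rtrancl_into_rtrancl cfg_step_append_context)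

lemma cfg_steps_append:
  "(x, x') \<in> (cfg_step P)\<^sup>* \<Longrightarrow> (y, y') \<in> (cfg_step P)\<^sup>* \<Longrightarrow> (x @ y, x' @ y') \<in> (cfg_step P)\<^sup>*"
  using cfg_steps_append_context[of x x' P "[]" y] cfg_steps_append_context[of y y' P x' "[]"]
  by (simp add: rtrancl_trans)

section \<open>Normal forms in \<open>\<Pi>\<^sub>2\<close>\<close>

abbreviation pi2_cong :: "(abc list \<times> abc list) set" where
  "pi2_cong \<equiv> pres_cong Pi2_rels"

abbreviation Pi2 :: "abc list set monoid" where
  "Pi2 \<equiv> pres_monoid Pi2_rels"

definition ab_pow_c :: "nat \<Rightarrow> abc list" where
  "ab_pow_c k = a # replicate k b @ [c]"

definition relator :: "nat \<Rightarrow> abc list" where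
  "relator k = ab_pow_c k @ ab_pow_c k"

lemma replicate_b_Cons_inj:
  "x \<noteq> b \<Longrightarrow> y \<noteq> b \<Longrightarrow> replicate i b @ x # xs = replicate k b @ y # ys
    \<Longrightarrow> i = k \<and> x = y \<and> xs = ys"
proof (induction i arbitrary: k)
  case 0 then show ?case by (cases k) auto
next
  case (Suc i) then show ?case by (cases k) auto
qed

lemma append_ab_pow_c_inj: "p @ ab_pow_c j = p' @ ab_pow_c j' \<Longrightarrow> p = p' \<and> j = j'"
proof -
  assume "p @ ab_pow_c j = p' @ ab_pow_c j'"
  then have "rev (p @ ab_pow_c j) = rev (p' @ ab_pow_c j')" by simp
  then have "replicate j b @ a # rev p = replicate j' b @ a # rev p'"
    by (simp add: ab_pow_c_def)
  from replicate_b_Cons_inj[OF _ _ this] show ?thesis by auto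
qed

lemma append_relator_inj: "p @ relator j = p' @ relator j' \<Longrightarrow> p = p' \<and> j = j'"
  unfolding relator_def using append_ab_pow_c_inj by (metis append_assoc)

lemma relator_eq_butlast_snoc_c: "relator j = butlast (relator j) @ [c]"
  by (simp add: relator_def ab_pow_c_def butlast_append)

lemma Pi2_rels_iff: "(l, r) \<in> Pi2_rels \<longleftrightarrow> (\<exists>i\<ge>1. l = relator i \<and> r = [])"
  by (auto simp: Pi2_rels_def relator_def ab_pow_c_def)

lemma relator_cancel: "1 \<le> k \<Longrightarrow> (u @ relator k @ v, u @ v) \<in> pi2_cong"
  using pres_cong.base[of "relator k" "[]" Pi2_rels u v] by (auto simp: Pi2_rels_iff)

definition reduce_snoc :: "abc list \<Rightarrow> abc \<Rightarrow> abc list" where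
  "reduce_snoc s y =
    (if \<exists>p j. 1 \<le> j \<and> s @ [y] = p @ relator j
     then SOME p. \<exists>j. 1 \<le> j \<and> s @ [y] = p @ relator j else s @ [y])"

definition normal_form :: "abc list \<Rightarrow> abc list" where
  "normal_form w = foldl reduce_snoc [] w"

definition reduced :: "abc list \<Rightarrow> bool" where
  "reduced s \<longleftrightarrow> \<not> (\<exists>p q j. 1 \<le> j \<and> s = p @ relator j @ q)"

lemma reduce_snoc_cancel: "1 \<le> j \<Longrightarrow> s @ [y] = p @ relator j \<Longrightarrow> reduce_snoc s y = p"
proof -
  assume h: "1 \<le> j" "s @ [y] = p @ relator j"
  have "(SOME p. \<exists>j. 1 \<le> j \<and> s @ [y] = p @ relator j) = p"
    by (rule someI2[of _ p]) (use h append_relator_inj in metis)+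
  then show ?thesis using h unfolding reduce_snoc_def by auto
qed

lemma reduce_snoc_push:
  "\<not> (\<exists>p j. 1 \<le> j \<and> s @ [y] = p @ relator j) \<Longrightarrow> reduce_snoc s y = s @ [y]"
  unfolding reduce_snoc_def by auto

lemma reduce_snoc_not_c: "y \<noteq> c \<Longrightarrow> reduce_snoc s y = s @ [y]"
  by (rule reduce_snoc_push) (metis relator_eq_butlast_snoc_c append_assoc last_snoc)

lemma foldl_reduce_snoc_c_free: "c \<notin> set w \<Longrightarrow> foldl reduce_snoc s w = s @ w"
  by (induction w arbitrary: s) (auto simp: reduce_snoc_not_c)

lemma foldl_reduce_snoc_ab_pow_c:
  "foldl reduce_snoc s (ab_pow_c k) = reduce_snoc (s @ a # replicate k b) c"
proof -
  have "foldl reduce_snoc s (a # replicate k b) = s @ a # replicate k b"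
    by (rule foldl_reduce_snoc_c_free) simp
  moreover have "ab_pow_c k = (a # replicate k b) @ [c]" by (simp add: ab_pow_c_def)
  ultimately show ?thesis by (simp only: foldl_append) simp
qed

lemma foldl_reduce_snoc_cancel_ab_pow_c:
  "1 \<le> k \<Longrightarrow> foldl reduce_snoc (p @ ab_pow_c k) (ab_pow_c k) = p"
  unfolding foldl_reduce_snoc_ab_pow_c
  by (rule reduce_snoc_cancel) (simp_all add: relator_def ab_pow_c_def)

lemma foldl_reduce_snoc_push_ab_pow_c:
  assumes "\<forall>p. s \<noteq> p @ ab_pow_c k"
  shows "foldl reduce_snoc s (ab_pow_c k) = s @ ab_pow_c k"
proof -
  have "\<not> (\<exists>p j. 1 \<le> j \<and> (s @ a # replicate k b) @ [c] = p @ relator j)"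
  proof
    assume "\<exists>p j. 1 \<le> j \<and> (s @ a # replicate k b) @ [c] = p @ relator j"
    then obtain p j where "s @ ab_pow_c k = (p @ ab_pow_c j) @ ab_pow_c j"
      by (auto simp: relator_def ab_pow_c_def)
    then show False using assms append_ab_pow_c_inj by metis
  qed
  then show ?thesis
    unfolding foldl_reduce_snoc_ab_pow_c by (subst reduce_snoc_push) (auto simp: ab_pow_c_def)
qed

lemma reduced_reduce_snoc [simp]: "reduced s \<Longrightarrow> reduced (reduce_snoc s y)"
proof (cases "\<exists>p j. 1 \<le> j \<and> s @ [y] = p @ relator j")
  case True
  then obtain p j where pj: "1 \<le> j" "s @ [y] = p @ relator j" by blast
  then have "s = p @ butlast (relator j)"
    by (metis relator_eq_butlast_snoc_c append_assoc butlast_snoc)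
  moreover assume "reduced s"
  ultimately show ?thesis using reduce_snoc_cancel[OF pj] unfolding reduced_def
    by (metis append_assoc)
next
  case False
  assume s: "reduced s"
  show ?thesis unfolding reduced_def reduce_snoc_push[OF False]
  proof
    assume "\<exists>p q j. 1 \<le> j \<and> s @ [y] = p @ relator j @ q"
    then obtain p q j where h: "1 \<le> j" "s @ [y] = p @ relator j @ q" by blast
    with False have "q \<noteq> []" by auto
    then have "s = p @ relator j @ butlast q" using h(2)
      by (metis append_assoc butlast_append butlast_snoc)
    then show False using s h(1) unfolding reduced_def by blast
  qed
qed

lemma reduced_foldl_reduce_snoc [simp]: "reduced s \<Longrightarrow> reduced (foldl reduce_snoc s w)"
  by (induction w arbitrary: s) auto

lemma reduced_Nil [simp]: "reduced []"
  by (simp add: reduced_def relator_def ab_pow_c_def)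

lemma reduced_normal_form: "reduced (normal_form w)"
  unfolding normal_form_def by (rule reduced_foldl_reduce_snoc[OF reduced_Nil])

lemma foldl_reduce_snoc_relator:
  assumes s: "reduced s" and k: "1 \<le> k"
  shows "foldl reduce_snoc s (relator k) = s"
proof (cases "\<exists>p. s = p @ ab_pow_c k")
  case True
  then obtain p where p: "s = p @ ab_pow_c k" by blast
  have "\<forall>p'. p \<noteq> p' @ ab_pow_c k"
    using s k unfolding p reduced_def relator_def by force
  then show ?thesis
    using foldl_reduce_snoc_cancel_ab_pow_c[OF k] foldl_reduce_snoc_push_ab_pow_c p
    by (simp add: relator_def)
next
  case False
  then show ?thesis
    using foldl_reduce_snoc_push_ab_pow_c foldl_reduce_snoc_cancel_ab_pow_c[OF k]
    by (simp add: relator_def)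
qed

lemma normal_form_Nil [simp]: "normal_form [] = []"
  by (simp add: normal_form_def)

lemma normal_form_append: "normal_form (u @ v) = foldl reduce_snoc (normal_form u) v"
  by (simp add: normal_form_def)

lemma normal_form_Cons: "normal_form (x # w) = foldl reduce_snoc (reduce_snoc [] x) w"
  by (simp add: normal_form_def)

lemma normal_form_eq_if_cong: "(u, v) \<in> pi2_cong \<Longrightarrow> normal_form u = normal_form v"
proof (induction rule: pres_cong.induct)
  case (base l r u v)
  then obtain i where "1 \<le> i" "l = relator i" "r = []" by (auto simp: Pi2_rels_iff)
  then show ?case
    by (simp add: normal_form_append[of "u @ relator i" v, simplified] normal_form_append
        foldl_reduce_snoc_relator reduced_normal_form)
qed auto

lemma cong_reduce_snoc: "(s @ [y], reduce_snoc s y) \<in> pi2_cong"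
proof (cases "\<exists>p j. 1 \<le> j \<and> s @ [y] = p @ relator j")
  case True
  then obtain p j where pj: "1 \<le> j" "s @ [y] = p @ relator j" by blast
  then show ?thesis using reduce_snoc_cancel[OF pj] relator_cancel[OF pj(1), of p "[]"] by simp
next
  case False then show ?thesis by (simp add: reduce_snoc_push pres_cong.refl)
qed

lemma cong_foldl_reduce_snoc: "(s @ w, foldl reduce_snoc s w) \<in> pi2_cong"
proof (induction w arbitrary: s)
  case Nil then show ?case by (simp add: pres_cong.refl)
next
  case (Cons y w)
  have "(s @ [y] @ w, reduce_snoc s y @ w) \<in> pi2_cong"
    using pres_cong_append_context[OF cong_reduce_snoc, of "[]" s y w] by simp
  with Cons.IH[of "reduce_snoc s y"] show ?case by (auto intro: pres_cong.trans)
qed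

lemma cong_normal_form: "(w, normal_form w) \<in> pi2_cong"
  using cong_foldl_reduce_snoc[of "[]" w] by (simp add: normal_form_def)

lemma pi2_cong_iff_normal_form: "(u, v) \<in> pi2_cong \<longleftrightarrow> normal_form u = normal_form v"
  using normal_form_eq_if_cong cong_normal_form by (metis pres_cong.sym pres_cong.trans)

lemma normal_form_reduced: "reduced w \<Longrightarrow> normal_form w = w"
proof (induction w rule: rev_induct)
  case (snoc y w)
  then have "reduced w" unfolding reduced_def by (metis append_assoc)
  moreover have "\<not> (\<exists>p j. 1 \<le> j \<and> w @ [y] = p @ relator j)"
    using snoc.prems unfolding reduced_def by (metis append_Nil2)
  ultimately show ?case
    using snoc.IH by (simp add: normal_form_append reduce_snoc_push)
qed simp

lemma foldl_reduce_snoc_cong: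
  assumes "reduced s" and "normal_form m = normal_form m'"
  shows "foldl reduce_snoc s m = foldl reduce_snoc s m'"
proof -
  have "(s @ m, s @ m') \<in> pi2_cong"
    using assms(2) pres_cong_append_context[of m m' Pi2_rels s "[]"]
    by (simp add: pi2_cong_iff_normal_form)
  then show ?thesis
    using assms(1) by (simp add: pi2_cong_iff_normal_form normal_form_append normal_form_reduced)
qed

lemma foldl_reduce_snoc_trivial [simp]:
  "reduced s \<Longrightarrow> normal_form e = [] \<Longrightarrow> foldl reduce_snoc s e = s"
  using foldl_reduce_snoc_cong[of s e "[]"] by simp

section \<open>A context-free grammar for the word problem\<close>

definition relator_core :: "nat \<Rightarrow> abc list" where
  "relator_core j = replicate j b @ [c, a] @ replicate j b"

lemma relator_core_Suc: "relator_core (Suc j) = b # relator_core j @ [b]"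
  by (simp add: relator_core_def replicate_append_same)

lemma a_relator_core_c: "a # relator_core j @ [c] = relator j"
  by (simp add: relator_core_def relator_def ab_pow_c_def)

text \<open>Nonterminal \<open>0\<close> is the start symbol; \<open>1\<close> generates the words equal to \<open>1\<close>, \<open>2\<close> the words
  equal to some \<open>b\<^sup>jcab\<^sup>j\<close> with \<open>j \<ge> 1\<close>, and \<open>3\<close> and \<open>4\<close> the reversals of the words generated
  by \<open>1\<close> and \<open>2\<close>. The start symbol generates \<open>u#v\<^sup>r\<^sup>e\<^sup>v\<close> by matching letters from both ends and
  inserting words equal to \<open>1\<close> on either side of \<open>#\<close>.\<close>

definition pi2_grammar :: "(nat \<times> (nat + abc wsym) list) set" where
  "pi2_grammar =
   {(0, [Inr Hash]), (0, [Inr (Gen a), Inl 0, Inr (Gen a)]), (0, [Inr (Gen b), Inl 0, Inr (Gen b)]),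
    (0, [Inr (Gen c), Inl 0, Inr (Gen c)]), (0, [Inl 1, Inl 0]), (0, [Inl 0, Inl 3]),
    (1, []), (1, [Inl 1, Inl 1]), (1, [Inr (Gen a), Inl 2, Inr (Gen c)]),
    (2, [Inl 1, Inr (Gen b), Inl 1, Inr (Gen c), Inl 1, Inr (Gen a), Inl 1, Inr (Gen b), Inl 1]),
    (2, [Inl 1, Inr (Gen b), Inl 2, Inr (Gen b), Inl 1]),
    (3, []), (3, [Inl 3, Inl 3]), (3, [Inr (Gen c), Inl 4, Inr (Gen a)]),
    (4, [Inl 3, Inr (Gen b), Inl 3, Inr (Gen a), Inl 3, Inr (Gen c), Inl 3, Inr (Gen b), Inl 3]),
    (4, [Inl 3, Inr (Gen b), Inl 4, Inr (Gen b), Inl 3])}"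

definition intended_lang :: "nat \<Rightarrow> abc wsym list \<Rightarrow> bool" where
  "intended_lang A w =
    (if A = 0 then \<exists>u v. w = map Gen u @ Hash # map Gen (rev v) \<and> normal_form u = normal_form v
     else if A = 1 then \<exists>e. w = map Gen e \<and> normal_form e = []
     else if A = 2 then \<exists>m j. 1 \<le> j \<and> w = map Gen m \<and> normal_form m = normal_form (relator_core j)
     else if A = 3 then \<exists>e. w = map Gen e \<and> normal_form (rev e) = []
     else if A = 4 then
       \<exists>m j. 1 \<le> j \<and> w = map Gen m \<and> normal_form (rev m) = normal_form (relator_core j)
     else False)"

fun form_lang :: "(nat + abc wsym) list \<Rightarrow> abc wsym list \<Rightarrow> bool" where
  "form_lang [] w \<longleftrightarrow> w = []"
| "form_lang (Inr t # al) w \<longleftrightarrow> (\<exists>w'. w = t # w' \<and> form_lang al w')"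
| "form_lang (Inl A # al) w \<longleftrightarrow> (\<exists>w1 w2. w = w1 @ w2 \<and> intended_lang A w1 \<and> form_lang al w2)"

lemma form_lang_append:
  "form_lang (al @ be) w \<longleftrightarrow> (\<exists>w1 w2. w = w1 @ w2 \<and> form_lang al w1 \<and> form_lang be w2)"
proof (induction al arbitrary: w)
  case (Cons x al)
  show ?case
  proof (cases x)
    case (Inl A)
    show ?thesis
    proof
      assume "form_lang ((x # al) @ be) w"
      then obtain w1 w2 v1 v2 where
        "w = w1 @ w2" "intended_lang A w1" "w2 = v1 @ v2" "form_lang al v1" "form_lang be v2"
        using Cons.IH by (auto simp: Inl)
      then show "\<exists>w1 w2. w = w1 @ w2 \<and> form_lang (x # al) w1 \<and> form_lang be w2"
        by (intro exI[of _ "w1 @ v1"] exI[of _ v2]) (auto simp: Inl)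
    next
      assume "\<exists>w1 w2. w = w1 @ w2 \<and> form_lang (x # al) w1 \<and> form_lang be w2"
      then obtain w1 w2 v1 v2 where
        "w = w1 @ w2" "w1 = v1 @ v2" "intended_lang A v1" "form_lang al v2" "form_lang be w2"
        by (auto simp: Inl)
      then show "form_lang ((x # al) @ be) w"
        using Cons.IH[of "v2 @ w2"] by (auto simp: Inl)
    qed
  next
    case (Inr t)
    show ?thesis using Cons.IH by (auto simp: Inr) (metis append_Cons, blast)
  qed
qed simp

lemma form_lang_map_Inr: "form_lang (map Inr w) w' \<longleftrightarrow> w' = w"
  by (induction w arbitrary: w') auto

lemma intended_lang_0:
  "intended_lang 0 w \<longleftrightarrow>
    (\<exists>u v. w = map Gen u @ Hash # map Gen (rev v) \<and> normal_form u = normal_form v)"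
  and intended_lang_1: "intended_lang 1 w \<longleftrightarrow> (\<exists>e. w = map Gen e \<and> normal_form e = [])"
  and intended_lang_2:
  "intended_lang 2 w \<longleftrightarrow>
    (\<exists>m j. 1 \<le> j \<and> w = map Gen m \<and> normal_form m = normal_form (relator_core j))"
  and intended_lang_3: "intended_lang 3 w \<longleftrightarrow> (\<exists>e. w = map Gen e \<and> normal_form (rev e) = [])"
  and intended_lang_4:
  "intended_lang 4 w \<longleftrightarrow>
    (\<exists>m j. 1 \<le> j \<and> w = map Gen m \<and> normal_form (rev m) = normal_form (relator_core j))"
  by (simp_all add: intended_lang_def)

lemmas intended_lang_simps =
  intended_lang_0 intended_lang_1 intended_lang_1[unfolded One_nat_def]
  intended_lang_2 intended_lang_3 intended_lang_4

lemma sound_S_Hash: "form_lang [Inr Hash] w \<Longrightarrow> intended_lang 0 w"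
  by (auto simp: intended_lang_0 intro!: exI[of _ "[]"])

lemma sound_S_match:
  assumes "form_lang [Inr (Gen x), Inl 0, Inr (Gen x)] w"
  shows "intended_lang 0 w"
proof -
  from assms obtain u v where w: "w = map Gen (x # u) @ Hash # map Gen (rev (x # v))"
    and uv: "normal_form u = normal_form v"
    by (auto simp: intended_lang_0)
  have "normal_form (x # u) = normal_form (x # v)"
    using foldl_reduce_snoc_cong[OF reduced_reduce_snoc[OF reduced_Nil] uv]
    by (simp add: normal_form_Cons)
  with w show ?thesis unfolding intended_lang_0 by blast
qed

lemma sound_S_trivial_left:
  assumes "form_lang [Inl 1, Inl 0] w"
  shows "intended_lang 0 w"
proof -
  from assms obtain e u v where w: "w = map Gen (e @ u) @ Hash # map Gen (rev v)"
    and "normal_form u = normal_form v" "normal_form e = []"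
    by (auto simp: intended_lang_simps)
  then have "normal_form (e @ u) = normal_form v"
    by (simp add: normal_form_append normal_form_def[symmetric])
  with w show ?thesis unfolding intended_lang_0 by blast
qed

lemma sound_S_trivial_right:
  assumes "form_lang [Inl 0, Inl 3] w"
  shows "intended_lang 0 w"
proof -
  from assms obtain e u v where w: "w = map Gen u @ Hash # map Gen (rev (rev e @ v))"
    and "normal_form u = normal_form v" "normal_form (rev e) = []"
    by (auto simp: intended_lang_simps)
  then have "normal_form u = normal_form (rev e @ v)"
    by (simp add: normal_form_append normal_form_def[symmetric])
  with w show ?thesis unfolding intended_lang_0 by blast
qed

lemma sound_D_Nil: "form_lang [] w \<Longrightarrow> intended_lang 1 w"
  by (auto simp: intended_lang_simps)

lemma sound_D_append:
  assumes "form_lang [Inl 1, Inl 1] w"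
  shows "intended_lang 1 w"
proof -
  from assms obtain e1 e2 where "w = map Gen (e1 @ e2)"
    and "normal_form e1 = []" "normal_form e2 = []"
    by (auto simp: intended_lang_simps)
  moreover from this have "normal_form (e1 @ e2) = []" by (simp add: normal_form_append)
  ultimately show ?thesis unfolding intended_lang_1 by blast
qed

lemma sound_D_relator:
  assumes "form_lang [Inr (Gen a), Inl 2, Inr (Gen c)] w"
  shows "intended_lang 1 w"
proof -
  from assms obtain m j where w: "w = map Gen (a # m @ [c])"
    and j: "1 \<le> j" and m: "normal_form m = normal_form (relator_core j)"
    by (auto simp: intended_lang_simps)
  have "foldl reduce_snoc (reduce_snoc [] a) m
      = foldl reduce_snoc (reduce_snoc [] a) (relator_core j)"
    by (rule foldl_reduce_snoc_cong) (simp_all add: m)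
  then have "normal_form (a # m @ [c]) = normal_form (relator j)"
    by (simp add: normal_form_Cons a_relator_core_c[symmetric])
  also have "\<dots> = []"
    using j by (simp add: normal_form_def foldl_reduce_snoc_relator)
  finally show ?thesis using w unfolding intended_lang_1 by blast
qed

lemma sound_K_base:
  assumes "form_lang [Inl 1, Inr (Gen b), Inl 1, Inr (Gen c), Inl 1, Inr (Gen a), Inl 1,
    Inr (Gen b), Inl 1] w"
  shows "intended_lang 2 w"
proof -
  from assms obtain e1 e2 e3 e4 e5 where
    w: "w = map Gen (e1 @ b # e2 @ c # e3 @ a # e4 @ b # e5)" and
    "normal_form e1 = []" "normal_form e2 = []" "normal_form e3 = []" "normal_form e4 = []"
    "normal_form e5 = []"
    by (auto simp: intended_lang_simps)
  then have "normal_form (e1 @ b # e2 @ c # e3 @ a # e4 @ b # e5) = normal_form (relator_core 1)"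
    by (simp add: normal_form_Cons normal_form_append relator_core_def)
  with w show ?thesis unfolding intended_lang_2 by (blast intro: le_refl)
qed

lemma sound_K_step:
  assumes "form_lang [Inl 1, Inr (Gen b), Inl 2, Inr (Gen b), Inl 1] w"
  shows "intended_lang 2 w"
proof -
  from assms obtain e1 m e2 j where
    w: "w = map Gen (e1 @ b # m @ b # e2)" and
    e: "normal_form e1 = []" "normal_form e2 = []" "1 \<le> j"
      "normal_form m = normal_form (relator_core j)"
    by (auto simp: intended_lang_simps)
  have "foldl reduce_snoc (reduce_snoc [] b) m
      = foldl reduce_snoc (reduce_snoc [] b) (relator_core j)"
    by (rule foldl_reduce_snoc_cong) (simp_all add: e)
  with e have "normal_form (e1 @ b # m @ b # e2) = normal_form (relator_core (Suc j))"
    by (simp add: normal_form_Cons normal_form_append relator_core_Suc)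
  with w e(3) show ?thesis unfolding intended_lang_2 by (blast intro: le_SucI)
qed

lemma sound_R_Nil: "form_lang [] w \<Longrightarrow> intended_lang 3 w"
  by (auto simp: intended_lang_simps)

lemma sound_R_append:
  assumes "form_lang [Inl 3, Inl 3] w"
  shows "intended_lang 3 w"
proof -
  from assms obtain e1 e2 where "w = map Gen (e1 @ e2)"
    and "normal_form (rev e1) = []" "normal_form (rev e2) = []"
    by (auto simp: intended_lang_simps)
  moreover from this have "normal_form (rev (e1 @ e2)) = []" by (simp add: normal_form_append)
  ultimately show ?thesis unfolding intended_lang_3 by blast
qed

lemma sound_R_relator:
  assumes "form_lang [Inr (Gen c), Inl 4, Inr (Gen a)] w"
  shows "intended_lang 3 w"
proof -
  from assms obtain m j where w: "w = map Gen (c # m @ [a])"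
    and j: "1 \<le> j" and m: "normal_form (rev m) = normal_form (relator_core j)"
    by (auto simp: intended_lang_simps)
  have "foldl reduce_snoc (reduce_snoc [] a) (rev m)
      = foldl reduce_snoc (reduce_snoc [] a) (relator_core j)"
    by (rule foldl_reduce_snoc_cong) (simp_all add: m)
  then have "normal_form (rev (c # m @ [a])) = normal_form (relator j)"
    by (simp add: normal_form_Cons a_relator_core_c[symmetric])
  also have "\<dots> = []"
    using j by (simp add: normal_form_def foldl_reduce_snoc_relator)
  finally show ?thesis using w unfolding intended_lang_3 by blast
qed

lemma sound_N_base:
  assumes "form_lang [Inl 3, Inr (Gen b), Inl 3, Inr (Gen a), Inl 3, Inr (Gen c), Inl 3,
    Inr (Gen b), Inl 3] w"
  shows "intended_lang 4 w"
proof -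
  from assms obtain e1 e2 e3 e4 e5 where
    w: "w = map Gen (e1 @ b # e2 @ a # e3 @ c # e4 @ b # e5)" and
    "normal_form (rev e1) = []" "normal_form (rev e2) = []" "normal_form (rev e3) = []"
    "normal_form (rev e4) = []" "normal_form (rev e5) = []"
    by (auto simp: intended_lang_simps)
  then have "normal_form (rev (e1 @ b # e2 @ a # e3 @ c # e4 @ b # e5))
      = normal_form (relator_core 1)"
    by (simp add: normal_form_Cons normal_form_append relator_core_def)
  with w show ?thesis unfolding intended_lang_4 by (blast intro: le_refl)
qed

lemma sound_N_step:
  assumes "form_lang [Inl 3, Inr (Gen b), Inl 4, Inr (Gen b), Inl 3] w"
  shows "intended_lang 4 w"
proof -
  from assms obtain e1 m e2 j where
    w: "w = map Gen (e1 @ b # m @ b # e2)" and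
    e: "normal_form (rev e1) = []" "normal_form (rev e2) = []" "1 \<le> j"
      "normal_form (rev m) = normal_form (relator_core j)"
    by (auto simp: intended_lang_simps)
  have "foldl reduce_snoc (reduce_snoc [] b) (rev m)
      = foldl reduce_snoc (reduce_snoc [] b) (relator_core j)"
    by (rule foldl_reduce_snoc_cong) (simp_all add: e)
  with e have "normal_form (rev (e1 @ b # m @ b # e2)) = normal_form (relator_core (Suc j))"
    by (simp add: normal_form_Cons normal_form_append relator_core_Suc)
  with w e(3) show ?thesis unfolding intended_lang_4 by (blast intro: le_SucI)
qed

lemma pi2_grammar_sound:
  assumes "(A, rhs) \<in> pi2_grammar" and "form_lang rhs w"
  shows "intended_lang A w"
  using assms unfolding pi2_grammar_def
  by (simp only: insert_iff empty_iff prod.inject simp_thms)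
    (elim disjE conjE; hypsubst;
      erule sound_S_Hash sound_S_match sound_S_trivial_left sound_S_trivial_right
        sound_D_Nil sound_D_append sound_D_relator sound_K_base sound_K_step
        sound_R_Nil sound_R_append sound_R_relator sound_N_base sound_N_step)

lemma cfg_step_sound:
  assumes "(al, be) \<in> cfg_step pi2_grammar" and "form_lang be w"
  shows "form_lang al w"
proof -
  from assms(1) obtain u v A r where al: "al = u @ [Inl A] @ v" and be: "be = u @ r @ v"
    and p: "(A, r) \<in> pi2_grammar" unfolding cfg_step_def by blast
  from assms(2) obtain w1 w2 w3 where
    "w = w1 @ w2 @ w3" "form_lang u w1" "form_lang r w2" "form_lang v w3"
    unfolding be form_lang_append by blast
  moreover from pi2_grammar_sound[OF p] this(3) have "form_lang [Inl A] w2" by simp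
  ultimately show ?thesis unfolding al form_lang_append by blast
qed

lemma word_problem_Pi2_iff: "w \<in> word_problem Pi2_rels \<longleftrightarrow> intended_lang 0 w"
  unfolding word_problem_def intended_lang_0 pi2_cong_iff_normal_form[symmetric]
  by (auto simp: rev_map)

lemma pi2_grammar_derives_sound:
  assumes "([Inl 0], map Inr w) \<in> (cfg_step pi2_grammar)\<^sup>*"
  shows "w \<in> word_problem Pi2_rels"
proof -
  have "form_lang al w" if "(al, be) \<in> (cfg_step pi2_grammar)\<^sup>*" "form_lang be w" for al be
    using that by (induction rule: rtrancl_induct) (auto intro: cfg_step_sound)
  from this[OF assms] show ?thesis by (simp add: form_lang_map_Inr word_problem_Pi2_iff)
qed

definition derives_form :: "(nat + abc wsym) list \<Rightarrow> abc wsym list \<Rightarrow> bool" where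
  "derives_form al w \<longleftrightarrow> (al, map Inr w) \<in> (cfg_step pi2_grammar)\<^sup>*"

abbreviation derives_word :: "nat \<Rightarrow> abc wsym list \<Rightarrow> bool" where
  "derives_word A w \<equiv> derives_form [Inl A] w"

lemma derives_form_Nil: "derives_form [] []"
  by (simp add: derives_form_def)

lemma derives_form_Inr: "derives_form al w \<Longrightarrow> derives_form (Inr t # al) (t # w)"
  unfolding derives_form_def
  using cfg_steps_append[of "[Inr t]" "[Inr t]" pi2_grammar al "map Inr w"] by simp

lemma derives_form_Inr_single: "derives_form [Inr t] [t]"
  by (simp add: derives_form_def)

lemma derives_form_Inl:
  "derives_word A w1 \<Longrightarrow> derives_form al w2 \<Longrightarrow> derives_form (Inl A # al) (w1 @ w2)"
  unfolding derives_form_def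
  using cfg_steps_append[of "[Inl A]" "map Inr w1" pi2_grammar al "map Inr w2"] by simp

lemma derives_word_production:
  assumes "(A, r) \<in> pi2_grammar" and "derives_form r w"
  shows "derives_word A w"
proof -
  have "([Inl A], r) \<in> cfg_step pi2_grammar"
    using assms(1) unfolding cfg_step_def by (intro CollectI exI[of _ "[]"]) auto
  with assms(2) show ?thesis unfolding derives_form_def by (meson converse_rtrancl_into_rtrancl)
qed

lemmas derives_form_intros =
  derives_form_Inr derives_form_Inr_single derives_form_Inl derives_form_Nil

text \<open>The words derived from nonterminals \<open>1\<close> and \<open>2\<close>. Conversely, every word equal to \<open>1\<close> turns
  out to be a \<open>trivial_word\<close> (see \<open>padded_normal_form\<close>).\<close>

inductive trivial_word :: "abc list \<Rightarrow> bool" and core_word :: "abc list \<Rightarrow> bool" where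
  trivial_Nil: "trivial_word []"
| trivial_append: "trivial_word e1 \<Longrightarrow> trivial_word e2 \<Longrightarrow> trivial_word (e1 @ e2)"
| trivial_relator: "core_word m \<Longrightarrow> trivial_word (a # m @ [c])"
| core_base: "trivial_word e1 \<Longrightarrow> trivial_word e2 \<Longrightarrow> trivial_word e3 \<Longrightarrow> trivial_word e4 \<Longrightarrow>
    trivial_word e5 \<Longrightarrow> core_word (e1 @ b # e2 @ c # e3 @ a # e4 @ b # e5)"
| core_step: "trivial_word e1 \<Longrightarrow> core_word m \<Longrightarrow> trivial_word e2 \<Longrightarrow>
    core_word (e1 @ b # m @ b # e2)"

lemma derives_trivial_core_word:
  shows "trivial_word e \<Longrightarrow> derives_word 1 (map Gen e)"
    and "core_word m \<Longrightarrow> derives_word 2 (map Gen m)"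
proof (induction e and m rule: trivial_word_core_word.inducts)
  case trivial_Nil
  show ?case
    by (rule derives_word_production[of 1 "[]"]) (simp_all add: pi2_grammar_def derives_form_Nil)
next
  case (trivial_append e1 e2)
  have "derives_word 1 (map Gen e1 @ map Gen e2)"
    by (rule derives_word_production[of 1 "[Inl 1, Inl 1]"])
      (use trivial_append.IH in \<open>auto simp: pi2_grammar_def intro!: derives_form_intros\<close>)
  then show ?case by simp
next
  case (trivial_relator m)
  have "derives_word 1 (Gen a # map Gen m @ [Gen c])"
    by (rule derives_word_production[of 1 "[Inr (Gen a), Inl 2, Inr (Gen c)]"])
      (use trivial_relator.IH in \<open>auto simp: pi2_grammar_def intro!: derives_form_intros\<close>)
  then show ?case by simp
next
  case (core_base e1 e2 e3 e4 e5)
  have "derives_word 2 (map Gen e1 @ Gen b # map Gen e2 @ Gen c # map Gen e3 @ Gen a #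
      map Gen e4 @ Gen b # map Gen e5)"
    by (rule derives_word_production[of 2 "[Inl 1, Inr (Gen b), Inl 1, Inr (Gen c), Inl 1,
        Inr (Gen a), Inl 1, Inr (Gen b), Inl 1]"])
      (use core_base.IH in \<open>auto simp: pi2_grammar_def intro!: derives_form_intros\<close>)
  then show ?case by simp
next
  case (core_step e1 m e2)
  have "derives_word 2 (map Gen e1 @ Gen b # map Gen m @ Gen b # map Gen e2)"
    by (rule derives_word_production[of 2 "[Inl 1, Inr (Gen b), Inl 2, Inr (Gen b), Inl 1]"])
      (use core_step.IH in \<open>auto simp: pi2_grammar_def intro!: derives_form_intros\<close>)
  then show ?case by simp
qed

lemma derives_rev_trivial_core_word:
  shows "trivial_word e \<Longrightarrow> derives_word 3 (map Gen (rev e))"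
    and "core_word m \<Longrightarrow> derives_word 4 (map Gen (rev m))"
proof (induction e and m rule: trivial_word_core_word.inducts)
  case trivial_Nil
  show ?case
    by (rule derives_word_production[of 3 "[]"]) (simp_all add: pi2_grammar_def derives_form_Nil)
next
  case (trivial_append e1 e2)
  have "derives_word 3 (map Gen (rev e2) @ map Gen (rev e1))"
    by (rule derives_word_production[of 3 "[Inl 3, Inl 3]"])
      (use trivial_append.IH in \<open>auto simp: pi2_grammar_def intro!: derives_form_intros\<close>)
  then show ?case by simp
next
  case (trivial_relator m)
  have "derives_word 3 (Gen c # map Gen (rev m) @ [Gen a])"
    by (rule derives_word_production[of 3 "[Inr (Gen c), Inl 4, Inr (Gen a)]"])
      (use trivial_relator.IH in \<open>auto simp: pi2_grammar_def intro!: derives_form_intros\<close>)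
  then show ?case by simp
next
  case (core_base e1 e2 e3 e4 e5)
  have "derives_word 4 (map Gen (rev e5) @ Gen b # map Gen (rev e4) @ Gen a #
      map Gen (rev e3) @ Gen c # map Gen (rev e2) @ Gen b # map Gen (rev e1))"
    by (rule derives_word_production[of 4 "[Inl 3, Inr (Gen b), Inl 3, Inr (Gen a), Inl 3,
        Inr (Gen c), Inl 3, Inr (Gen b), Inl 3]"])
      (use core_base.IH in \<open>auto simp: pi2_grammar_def intro!: derives_form_intros\<close>)
  then show ?case by simp
next
  case (core_step e1 m e2)
  have "derives_word 4 (map Gen (rev e2) @ Gen b # map Gen (rev m) @ Gen b #
      map Gen (rev e1))"
    by (rule derives_word_production[of 4 "[Inl 3, Inr (Gen b), Inl 4, Inr (Gen b), Inl 3]"])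
      (use core_step.IH in \<open>auto simp: pi2_grammar_def intro!: derives_form_intros\<close>)
  then show ?case by simp
qed

inductive derivable_pair :: "abc list \<Rightarrow> abc list \<Rightarrow> bool" where
  pair_Nil: "derivable_pair [] []"
| pair_Cons: "derivable_pair u v \<Longrightarrow> derivable_pair (x # u) (x # v)"
| pair_trivial_left: "trivial_word e \<Longrightarrow> derivable_pair u v \<Longrightarrow> derivable_pair (e @ u) v"
| pair_trivial_right: "trivial_word e \<Longrightarrow> derivable_pair u v \<Longrightarrow> derivable_pair u (e @ v)"

lemma derives_derivable_pair:
  "derivable_pair u v \<Longrightarrow> derives_word 0 (map Gen u @ Hash # map Gen (rev v))"
proof (induction rule: derivable_pair.induct)
  case pair_Nil
  show ?case
    by (rule derives_word_production[of 0 "[Inr Hash]"])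
      (simp_all add: pi2_grammar_def derives_form_Inr_single)
next
  case (pair_Cons u v x)
  have "(0, [Inr (Gen x), Inl 0, Inr (Gen x)]) \<in> pi2_grammar"
    by (cases x) (simp_all add: pi2_grammar_def)
  then have "derives_word 0 (Gen x # (map Gen u @ Hash # map Gen (rev v)) @ [Gen x])"
    by (rule derives_word_production)
      (intro derives_form_Inr derives_form_Inl[OF pair_Cons.IH] derives_form_Inr_single)
  then show ?case by simp
next
  case (pair_trivial_left e u v)
  have "derives_word 0 (map Gen e @ (map Gen u @ Hash # map Gen (rev v)))"
    by (rule derives_word_production[of 0 "[Inl 1, Inl 0]"])
      (use pair_trivial_left.IH derives_trivial_core_word(1)[OF pair_trivial_left.hyps(1)]
        in \<open>auto simp: pi2_grammar_def intro!: derives_form_intros\<close>)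
  then show ?case by simp
next
  case (pair_trivial_right e u v)
  have "derives_word 0 ((map Gen u @ Hash # map Gen (rev v)) @ map Gen (rev e))"
    by (rule derives_word_production[of 0 "[Inl 0, Inl 3]"], simp add: pi2_grammar_def)
      (rule derives_form_Inl[OF pair_trivial_right.IH],
        rule derives_rev_trivial_core_word(1)[OF pair_trivial_right.hyps(1)])
  then show ?case by simp
qed

lemma derivable_pair_snoc: "derivable_pair u v \<Longrightarrow> derivable_pair (u @ [x]) (v @ [x])"
  by (induction rule: derivable_pair.induct) (auto intro: derivable_pair.intros)

lemma derivable_pair_append_trivial_left:
  "derivable_pair u v \<Longrightarrow> trivial_word e \<Longrightarrow> derivable_pair (u @ e) v"
  by (induction rule: derivable_pair.induct)
    (auto intro: derivable_pair.intros pair_trivial_left[of _ "[]" "[]", simplified])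

lemma derivable_pair_append_trivial_right:
  "derivable_pair u v \<Longrightarrow> trivial_word e \<Longrightarrow> derivable_pair u (v @ e)"
  by (induction rule: derivable_pair.induct)
    (auto intro: derivable_pair.intros pair_trivial_right[of _ "[]" "[]", simplified])

inductive padded :: "abc list \<Rightarrow> abc list \<Rightarrow> bool" where
  padded_Nil: "padded [] []"
| padded_snoc: "padded y w \<Longrightarrow> padded (y @ [x]) (w @ [x])"
| padded_append_trivial: "padded y w \<Longrightarrow> trivial_word e \<Longrightarrow> padded y (w @ e)"

lemma padded_Nil_trivial: "padded y w \<Longrightarrow> y = [] \<Longrightarrow> trivial_word w"
  by (induction rule: padded.induct) (auto intro: trivial_word_core_word.intros)

lemma padded_snocE:
  "padded y' w \<Longrightarrow> y' = y @ [x] \<Longrightarrow>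
    \<exists>w' e. w = w' @ [x] @ e \<and> padded y w' \<and> trivial_word e"
proof (induction arbitrary: y x rule: padded.induct)
  case (padded_snoc y0 w x0)
  then show ?case using trivial_Nil by (intro exI[of _ w] exI[of _ "[]"]) auto
next
  case (padded_append_trivial y0 w e)
  then obtain w' e' where "w = w' @ [x] @ e'" "padded y w'" "trivial_word e'" by blast
  with padded_append_trivial.hyps(2) show ?case
    by (intro exI[of _ w'] exI[of _ "e' @ e"]) (auto intro: trivial_append)
qed simp

lemma derivable_pair_if_padded: "padded y u \<Longrightarrow> padded y v \<Longrightarrow> derivable_pair u v"
proof (induction arbitrary: v rule: padded.induct)
  case padded_Nil
  then have "trivial_word v" using padded_Nil_trivial by blast
  then show ?case using pair_trivial_right[OF _ pair_Nil, of v] by simp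
next
  case (padded_snoc y w x)
  then obtain v' e where v: "v = v' @ [x] @ e" "padded y v'" "trivial_word e"
    using padded_snocE by blast
  have "derivable_pair (w @ [x]) (v' @ [x])"
    using derivable_pair_snoc[OF padded_snoc.IH[OF v(2)]] .
  then show ?case using derivable_pair_append_trivial_right v(1,3) by fastforce
next
  case (padded_append_trivial y w e)
  then show ?case using derivable_pair_append_trivial_left by blast
qed

lemma padded_append_split:
  "padded y w \<Longrightarrow> y = y1 @ y2 \<Longrightarrow> \<exists>w1 w2. w = w1 @ w2 \<and> padded y1 w1 \<and> padded y2 w2"
proof (induction arbitrary: y2 rule: padded.induct)
  case padded_Nil then show ?case by (auto intro: padded.padded_Nil)
next
  case (padded_snoc y w x)
  show ?case
  proof (cases y2 rule: rev_cases)
    case Nil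
    with padded_snoc show ?thesis by (metis append_Nil2 padded.intros(1,2))
  next
    case (snoc z x')
    with padded_snoc.prems have "y = y1 @ z" "x' = x" by auto
    with padded_snoc.IH obtain w1 w2 where "w = w1 @ w2" "padded y1 w1" "padded z w2" by blast
    with snoc \<open>x' = x\<close> show ?thesis by (metis append_assoc padded.padded_snoc)
  qed
next
  case (padded_append_trivial y w e)
  then obtain w1 w2 where "w = w1 @ w2" "padded y1 w1" "padded y2 w2" by blast
  with padded_append_trivial.hyps(2) show ?case
    by (metis append_assoc padded.padded_append_trivial)
qed

lemma padded_prepend_trivial: "padded y w \<Longrightarrow> trivial_word e \<Longrightarrow> padded y (e @ w)"
proof (induction rule: padded.induct)
  case padded_Nil then show ?case using padded_append_trivial[OF padded.padded_Nil] by simp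
next
  case (padded_snoc y w x) then show ?case using padded.padded_snoc[of y "e @ w" x] by simp
next
  case (padded_append_trivial y w e')
  then show ?case using padded.padded_append_trivial[of y "e @ w" e'] by simp
qed

lemma padded_singleE:
  assumes "padded [x] w"
  obtains e1 e2 where "w = e1 @ x # e2" "trivial_word e1" "trivial_word e2"
  using padded_snocE[OF assms, of "[]" x] padded_Nil_trivial by auto

lemma padded_ab_pow_cE:
  assumes "padded (ab_pow_c k) w"
  obtains e1 w' e2 where "w = e1 @ a # w' @ c # e2" "padded (replicate k b) w'"
    "trivial_word e1" "trivial_word e2"
proof -
  have "ab_pow_c k = [a] @ replicate k b @ [c]" by (simp add: ab_pow_c_def)
  with assms obtain w1 w2 w3 where w: "w = w1 @ w2 @ w3" "padded [a] w1"
    "padded (replicate k b) w2" "padded [c] w3"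
    by (metis padded_append_split)
  obtain e1 e1' where "w1 = e1 @ a # e1'" "trivial_word e1" "trivial_word e1'"
    using padded_singleE[OF w(2)] .
  moreover obtain e2' e2 where "w3 = e2' @ c # e2" "trivial_word e2'" "trivial_word e2"
    using padded_singleE[OF w(4)] .
  moreover from calculation have "padded (replicate k b) (e1' @ w2 @ e2')"
    using padded_prepend_trivial padded_append_trivial w(3) by (metis append_assoc)
  ultimately show ?thesis
    using that[of e1 "e1' @ w2 @ e2'" e2] w(1) by simp
qed

lemma core_word_if_padded:
  "padded (replicate (Suc k) b) w \<Longrightarrow> padded (replicate (Suc k) b) w' \<Longrightarrow> trivial_word d \<Longrightarrow>
    core_word (w @ c # d @ a # w')"
proof (induction k arbitrary: w w')
  case 0
  then have "padded [b] w" "padded [b] w'" by simp_all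
  obtain e1 e2 where "w = e1 @ b # e2" "trivial_word e1" "trivial_word e2"
    using padded_singleE[OF \<open>padded [b] w\<close>] .
  moreover obtain e4 e5 where "w' = e4 @ b # e5" "trivial_word e4" "trivial_word e5"
    using padded_singleE[OF \<open>padded [b] w'\<close>] .
  ultimately show ?case using "0.prems"(3) by (simp add: core_base)
next
  case (Suc k)
  have "replicate (Suc (Suc k)) b = [b] @ replicate (Suc k) b" by simp
  then obtain w1 w2 where w: "w = w1 @ w2" "padded [b] w1" "padded (replicate (Suc k) b) w2"
    using padded_append_split[OF Suc.prems(1)] by blast
  obtain e1 e2 where e: "w1 = e1 @ b # e2" "trivial_word e1" "trivial_word e2"
    using padded_singleE[OF w(2)] .
  have "replicate (Suc (Suc k)) b = replicate (Suc k) b @ [b]"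
    by (simp add: replicate_append_same)
  then obtain v' e' where v: "w' = v' @ [b] @ e'" "padded (replicate (Suc k) b) v'"
    "trivial_word e'"
    using padded_snocE[OF Suc.prems(2)] by blast
  have "padded (replicate (Suc k) b) (e2 @ w2)" using padded_prepend_trivial w(3) e(3) .
  then have "core_word ((e2 @ w2) @ c # d @ a # v')" using Suc.IH v(2) Suc.prems(3) by blast
  then have "core_word (e1 @ b # ((e2 @ w2) @ c # d @ a # v') @ b # e')"
    by (rule core_step[OF e(2) _ v(3)])
  then show ?case using w e v by simp
qed

lemma trivial_word_if_padded_relator:
  assumes j: "1 \<le> j" and "padded (relator j) w"
  shows "trivial_word w"
proof -
  obtain k where k: "j = Suc k" using j by (cases j) auto
  obtain w1 w2 where "w = w1 @ w2" "padded (ab_pow_c j) w1" "padded (ab_pow_c j) w2"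
    using padded_append_split[OF assms(2)[unfolded relator_def]] by blast
  moreover obtain e1 v1 d1 where
    "w1 = e1 @ a # v1 @ c # d1" "padded (replicate j b) v1" "trivial_word e1" "trivial_word d1"
    using padded_ab_pow_cE[OF calculation(2)] .
  moreover obtain d2 v2 e2 where
    "w2 = d2 @ a # v2 @ c # e2" "padded (replicate j b) v2" "trivial_word d2" "trivial_word e2"
    using padded_ab_pow_cE[OF calculation(3)] .
  ultimately have "core_word (v1 @ c # (d1 @ d2) @ a # v2)"
    and "w = e1 @ (a # (v1 @ c # (d1 @ d2) @ a # v2) @ [c]) @ e2"
    using core_word_if_padded[of k v1 v2 "d1 @ d2"] k by (auto intro: trivial_append)
  with \<open>trivial_word e1\<close> \<open>trivial_word e2\<close> show ?thesis
    by (metis trivial_append trivial_relator)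
qed

lemma padded_normal_form: "padded (normal_form u) u"
proof (induction u rule: rev_induct)
  case Nil then show ?case by (simp add: padded_Nil)
next
  case (snoc x u)
  have nf: "normal_form (u @ [x]) = reduce_snoc (normal_form u) x"
    by (simp add: normal_form_append)
  have padded: "padded (normal_form u @ [x]) (u @ [x])" using padded.padded_snoc[OF snoc.IH] .
  show ?case
  proof (cases "\<exists>p j. 1 \<le> j \<and> normal_form u @ [x] = p @ relator j")
    case True
    then obtain p j where pj: "1 \<le> j" "normal_form u @ [x] = p @ relator j" by blast
    obtain w1 w2 where "u @ [x] = w1 @ w2" "padded p w1" "padded (relator j) w2"
      using padded_append_split[OF padded pj(2)] by blast
    moreover have "trivial_word w2"
      using trivial_word_if_padded_relator[OF pj(1)] calculation by blast
    ultimately show ?thesis using nf reduce_snoc_cancel[OF pj] padded_append_trivial by metis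
  next
    case False
    then show ?thesis using nf padded by (simp add: reduce_snoc_push)
  qed
qed

lemma derivable_pair_if_cong: "(u, v) \<in> pi2_cong \<Longrightarrow> derivable_pair u v"
  using padded_normal_form[of u] padded_normal_form[of v] derivable_pair_if_padded
  by (metis pi2_cong_iff_normal_form)

theorem context_free_word_problem_Pi2: "context_free (word_problem Pi2_rels)"
  unfolding context_free_def
proof (intro exI[of _ pi2_grammar] exI[of _ 0] conjI)
  show "finite pi2_grammar" by (simp add: pi2_grammar_def)
  show "word_problem Pi2_rels = {w. ([Inl 0], map Inr w) \<in> (cfg_step pi2_grammar)\<^sup>*}"
  proof (rule equalityI; rule subsetI)
    fix w assume "w \<in> word_problem Pi2_rels"
    then obtain u v where "w = map Gen u @ Hash # map Gen (rev v)" "(u, v) \<in> pi2_cong"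
      unfolding word_problem_def by (auto simp: rev_map)
    then show "w \<in> {w. ([Inl 0], map Inr w) \<in> (cfg_step pi2_grammar)\<^sup>*}"
      using derives_derivable_pair[OF derivable_pair_if_cong] by (simp add: derives_form_def)
  next
    fix w assume "w \<in> {w. ([Inl 0], map Inr w) \<in> (cfg_step pi2_grammar)\<^sup>*}"
    then show "w \<in> word_problem Pi2_rels" using pi2_grammar_derives_sound by blast
  qed
qed

section \<open>The group of units of \<open>\<Pi>\<^sub>2\<close>\<close>

fun swap_ac :: "abc \<Rightarrow> abc" where
  "swap_ac a = c"
| "swap_ac b = b"
| "swap_ac c = a"

definition mirror :: "abc list \<Rightarrow> abc list" where
  "mirror w = rev (map swap_ac w)"

lemma swap_ac_swap_ac [simp]: "swap_ac (swap_ac x) = x"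
  by (cases x) auto

lemma mirror_Nil [simp]: "mirror [] = []"
  and mirror_append [simp]: "mirror (u @ v) = mirror v @ mirror u"
  and mirror_mirror [simp]: "mirror (mirror w) = w"
  and mirror_ab_pow_c [simp]: "mirror (ab_pow_c k) = ab_pow_c k"
  and mirror_relator [simp]: "mirror (relator k) = relator k"
  by (simp_all add: mirror_def rev_map comp_def ab_pow_c_def relator_def)

lemma pi2_cong_mirror: "(u, v) \<in> pi2_cong \<Longrightarrow> (mirror u, mirror v) \<in> pi2_cong"
proof (induction rule: pres_cong.induct)
  case (base l r u v)
  then obtain i where "1 \<le> i" "l = relator i" "r = []" by (auto simp: Pi2_rels_iff)
  then show ?case using relator_cancel[of i "mirror v" "mirror u"] by simp
qed (auto intro: pres_cong.intros)

lemma reduced_mirror: "reduced w \<Longrightarrow> reduced (mirror w)"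
  unfolding reduced_def by (metis append_assoc mirror_append mirror_mirror mirror_relator)

lemma normal_form_mirror: "normal_form (mirror u) = mirror (normal_form u)"
proof -
  have "(mirror u, mirror (normal_form u)) \<in> pi2_cong"
    by (rule pi2_cong_mirror[OF cong_normal_form])
  then have "normal_form (mirror u) = normal_form (mirror (normal_form u))"
    by (simp add: pi2_cong_iff_normal_form)
  also have "\<dots> = mirror (normal_form u)"
    by (rule normal_form_reduced[OF reduced_mirror[OF reduced_normal_form]])
  finally show ?thesis .
qed

inductive prefix_product :: "abc list \<Rightarrow> bool" where
  prefix_Nil: "prefix_product []"
| prefix_ab_pow: "prefix_product g \<Longrightarrow> prefix_product (a # replicate i b @ g)"
| prefix_ab_pow_c: "prefix_product g \<Longrightarrow> 1 \<le> k \<Longrightarrow> prefix_product (ab_pow_c k @ g)"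

lemma prefix_product_append: "prefix_product q \<Longrightarrow> prefix_product g \<Longrightarrow> prefix_product (q @ g)"
  by (induction rule: prefix_product.induct) (auto intro: prefix_product.intros)

lemma prefix_product_ConsE: "prefix_product g \<Longrightarrow> g \<noteq> [] \<Longrightarrow> \<exists>g'. g = a # g'"
  by (induction rule: prefix_product.induct) (auto simp: ab_pow_c_def)

lemma prefix_product_proper_prefix_ab_pow_c:
  assumes "q @ r = ab_pow_c k" and "r \<noteq> []"
  shows "prefix_product q"
proof (cases q)
  case Nil then show ?thesis by (simp add: prefix_Nil)
next
  case (Cons x q')
  have "length q + length r = Suc (Suc k)"
    using arg_cong[OF assms(1), of length] by (simp add: ab_pow_c_def)
  with assms(2) have "length q \<le> Suc k" by (cases r) auto
  moreover from assms have "q = take (length q) (ab_pow_c k)" by (metis append_eq_conv_conj)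
  ultimately have "q = a # replicate (length q') b"
    by (simp add: Cons ab_pow_c_def take_append min_def)
  then show ?thesis using prefix_ab_pow[OF prefix_Nil, of "length q'"] by simp
qed

lemma prefix_product_proper_prefix_relator:
  assumes j: "1 \<le> j" and "q @ r = relator j" and r: "r \<noteq> []"
  shows "prefix_product q"
proof -
  from assms(2) obtain us where
    "q = ab_pow_c j @ us \<and> us @ r = ab_pow_c j \<or> q @ us = ab_pow_c j \<and> r = us @ ab_pow_c j"
    unfolding relator_def append_eq_append_conv2 by blast
  then show ?thesis
  proof (elim disjE conjE)
    assume "q = ab_pow_c j @ us" "us @ r = ab_pow_c j"
    then show ?thesis
      using prefix_ab_pow_c[OF prefix_product_proper_prefix_ab_pow_c j] r by simp
  next
    assume q: "q @ us = ab_pow_c j"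
    show ?thesis
    proof (cases "us = []")
      case True
      then show ?thesis using q prefix_ab_pow_c[OF prefix_Nil j] by simp
    next
      case False
      then show ?thesis using q by (rule prefix_product_proper_prefix_ab_pow_c[rotated])
    qed
  qed
qed

text \<open>While a word \<open>t\<close> is pushed onto the stack \<open>s\<close>, the reduction can only eat into \<open>s\<close> by
  cancelling relators whose proper prefixes lie in \<open>s\<close>.\<close>

lemma foldl_reduce_snoc_erases_prefix_product:
  "\<exists>s' g h. s = s' @ g \<and> prefix_product g \<and> foldl reduce_snoc s t = s' @ h"
proof (induction t rule: rev_induct)
  case Nil
  show ?case by (intro exI[of _ s] exI[of _ "[]"]) (simp add: prefix_Nil)
next
  case (snoc x t)
  then obtain s' g h where IH: "s = s' @ g" "prefix_product g" "foldl reduce_snoc s t = s' @ h"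
    by blast
  show ?case
  proof (cases "\<exists>p j. 1 \<le> j \<and> (s' @ h) @ [x] = p @ relator j")
    case True
    then obtain p j where pj: "1 \<le> j" "(s' @ h) @ [x] = p @ relator j" by blast
    then have result: "foldl reduce_snoc s (t @ [x]) = p"
      using IH(3) reduce_snoc_cancel by simp
    from pj(2) obtain us where
      "s' = p @ us \<and> us @ h @ [x] = relator j \<or> s' @ us = p \<and> h @ [x] = us @ relator j"
      unfolding append_assoc append_eq_append_conv2 by blast
    then show ?thesis
    proof (elim disjE conjE)
      assume "s' = p @ us" "us @ h @ [x] = relator j"
      then have "s = p @ (us @ g)" "prefix_product (us @ g)"
        using IH prefix_product_append prefix_product_proper_prefix_relator[OF pj(1)] by auto
      then show ?thesis using result by (intro exI[of _ p] exI[of _ "us @ g"] exI[of _ "[]"]) simp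
    next
      assume "s' @ us = p"
      then show ?thesis using IH result by blast
    qed
  next
    case False
    then show ?thesis using IH by (auto simp: reduce_snoc_push)
  qed
qed

lemma prefix_product_if_foldl_reduce_snoc_Nil:
  "foldl reduce_snoc s t = [] \<Longrightarrow> prefix_product s"
  using foldl_reduce_snoc_erases_prefix_product[of s t] by auto

inductive suffix_product :: "abc list \<Rightarrow> bool" where
  suffix_Nil: "suffix_product []"
| suffix_b_pow_c: "suffix_product g \<Longrightarrow> suffix_product (replicate i b @ c # g)"
| suffix_ab_pow_c: "suffix_product g \<Longrightarrow> 1 \<le> k \<Longrightarrow> suffix_product (ab_pow_c k @ g)"

lemma suffix_product_append: "suffix_product q \<Longrightarrow> suffix_product g \<Longrightarrow> suffix_product (q @ g)"
  by (induction rule: suffix_product.induct) (auto intro: suffix_product.intros)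

lemma suffix_product_mirror: "prefix_product w \<Longrightarrow> suffix_product (mirror w)"
proof (induction rule: prefix_product.induct)
  case (prefix_ab_pow g i)
  have "suffix_product (replicate i b @ [c])" using suffix_b_pow_c[OF suffix_Nil] by simp
  moreover have "mirror (a # replicate i b @ g) = mirror g @ replicate i b @ [c]"
    by (simp add: mirror_def)
  ultimately show ?case using suffix_product_append[OF prefix_ab_pow.IH] by simp
next
  case (prefix_ab_pow_c g k)
  then show ?case using suffix_product_append suffix_ab_pow_c[OF suffix_Nil] by fastforce
qed (simp add: suffix_Nil)

inductive involution_product :: "nat \<Rightarrow> abc list \<Rightarrow> bool" for L where
  involution_Nil: "involution_product L []"
| involution_snoc:
    "involution_product L g \<Longrightarrow> 1 \<le> k \<Longrightarrow> k \<le> L \<Longrightarrow> involution_product L (g @ ab_pow_c k)"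

lemma involution_product_Cons:
  "involution_product L g \<Longrightarrow> 1 \<le> k \<Longrightarrow> k \<le> L \<Longrightarrow> involution_product L (ab_pow_c k @ g)"
proof (induction rule: involution_product.induct)
  case involution_Nil
  then show ?case using involution_snoc[OF involution_product.involution_Nil] by simp
next
  case (involution_snoc g k')
  then show ?case using involution_product.involution_snoc[of L "ab_pow_c k @ g" k'] by simp
qed

lemma involution_product_mono: "involution_product L g \<Longrightarrow> L \<le> L' \<Longrightarrow> involution_product L' g"
  by (induction rule: involution_product.induct) (auto intro: involution_product.intros)

lemma involution_product_append_ab_pow_cD:
  "involution_product L (p @ ab_pow_c k) \<Longrightarrow> involution_product L p"
  by (cases rule: involution_product.cases) (auto dest: append_ab_pow_c_inj)

lemma involution_product_ab_pow_c_le: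
  assumes "involution_product L (ab_pow_c N)"
  shows "N \<le> L"
  using assms
proof (cases rule: involution_product.cases)
  case (involution_snoc g k)
  then show ?thesis using append_ab_pow_c_inj[of "[]" N g k] by simp
qed (simp add: ab_pow_c_def)

lemma not_suffix_product_a_b_pow:
  assumes "prefix_product g"
  shows "\<not> suffix_product (a # replicate i b @ g)"
proof
  assume "suffix_product (a # replicate i b @ g)"
  then show False
  proof (cases rule: suffix_product.cases)
    case (suffix_b_pow_c g' i')
    then show False by (cases i') auto
  next
    case (suffix_ab_pow_c g' k)
    then have e: "replicate i b @ g = replicate k b @ c # g'" by (simp add: ab_pow_c_def)
    show False
    proof (cases "g = []")
      case True
      with e have "c \<in> set (replicate i b)" by (metis append_Nil2 in_set_conv_decomp)
      then show False by simp
    next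
      case False
      then obtain g'' where "g = a # g''" using prefix_product_ConsE[OF assms] by blast
      with e show False using replicate_b_Cons_inj[of a c i g'' k g'] by simp
    qed
  qed
qed

lemma suffix_product_ab_pow_c_appendD:
  assumes "suffix_product (ab_pow_c k @ g)"
  shows "suffix_product g"
  using assms
proof (cases rule: suffix_product.cases)
  case (suffix_b_pow_c g' i)
  then show ?thesis by (cases i) (auto simp: ab_pow_c_def)
next
  case (suffix_ab_pow_c g' k')
  then have "replicate k b @ c # g = replicate k' b @ c # g'" by (simp add: ab_pow_c_def)
  with suffix_ab_pow_c show ?thesis using replicate_b_Cons_inj[of c c k g k' g'] by simp
qed (simp add: ab_pow_c_def)

lemma involution_product_if_prefix_suffix:
  "prefix_product s \<Longrightarrow> suffix_product s \<Longrightarrow> \<exists>L. involution_product L s"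
proof (induction rule: prefix_product.induct)
  case prefix_Nil then show ?case using involution_Nil by blast
next
  case (prefix_ab_pow g i)
  then show ?case using not_suffix_product_a_b_pow by blast
next
  case (prefix_ab_pow_c g k)
  then obtain L where "involution_product L g" using suffix_product_ab_pow_c_appendD by blast
  then have "involution_product (max L k) (ab_pow_c k @ g)"
    using involution_product_Cons[OF involution_product_mono] prefix_ab_pow_c.hyps(2) by simp
  then show ?case by blast
qed

lemma involution_product_foldl_reduce_snoc:
  "involution_product L t \<Longrightarrow> reduced s \<Longrightarrow> involution_product L s \<Longrightarrow>
    involution_product L (foldl reduce_snoc s t)"
proof (induction rule: involution_product.induct)
  case (involution_snoc g k)
  define s1 where "s1 = foldl reduce_snoc s g"
  have s1: "reduced s1" "involution_product L s1" using involution_snoc s1_def by auto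
  show ?case
  proof (cases "\<exists>p. s1 = p @ ab_pow_c k")
    case True
    then obtain p where p: "s1 = p @ ab_pow_c k" by blast
    then show ?thesis
      using foldl_reduce_snoc_cancel_ab_pow_c[OF involution_snoc.hyps(2)]
        involution_product_append_ab_pow_cD s1(2)
      by (simp add: s1_def[symmetric])
  next
    case False
    then show ?thesis
      using foldl_reduce_snoc_push_ab_pow_c involution_product.involution_snoc[OF s1(2)]
        involution_snoc.hyps(2,3)
      by (simp add: s1_def[symmetric])
  qed
qed simp

abbreviation pi2_class :: "abc list \<Rightarrow> abc list set" where
  "pi2_class \<equiv> pres_class Pi2_rels"

definition class_normal_form :: "abc list set \<Rightarrow> abc list" where
  "class_normal_form X = normal_form (SOME x. x \<in> X)"

lemma class_normal_form_pi2_class [simp]: "class_normal_form (pi2_class u) = normal_form u"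
  unfolding class_normal_form_def using pres_class_some[of u Pi2_rels]
  by (simp add: pi2_cong_iff_normal_form)

lemma class_normal_form_mult:
  assumes "X \<in> carrier Pi2" and "Y \<in> carrier Pi2"
  shows "class_normal_form (X \<otimes>\<^bsub>Pi2\<^esub> Y) =
    foldl reduce_snoc (class_normal_form X) (class_normal_form Y)"
proof -
  obtain u v where "X = pi2_class u" "Y = pi2_class v"
    using assms by (auto simp: carrier_pres_monoid)
  moreover have
    "foldl reduce_snoc (normal_form u) v = foldl reduce_snoc (normal_form u) (normal_form v)"
    by (rule foldl_reduce_snoc_cong) (simp_all add: reduced_normal_form normal_form_reduced)
  ultimately show ?thesis by (simp add: pres_class_mult normal_form_append)
qed

lemma unit_normal_form_involution_product:
  assumes "X \<in> Units Pi2"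
  shows "\<exists>L. involution_product L (class_normal_form X)"
proof -
  from assms obtain Y where "X \<in> carrier Pi2" "Y \<in> carrier Pi2"
    and "X \<otimes>\<^bsub>Pi2\<^esub> Y = \<one>\<^bsub>Pi2\<^esub>" "Y \<otimes>\<^bsub>Pi2\<^esub> X = \<one>\<^bsub>Pi2\<^esub>"
    unfolding Units_def by blast
  moreover from calculation obtain u v where X: "X = pi2_class u" and Y: "Y = pi2_class v"
    by (auto simp: carrier_pres_monoid)
  ultimately have uv: "(u @ v, []) \<in> pi2_cong" and vu: "(v @ u, []) \<in> pi2_cong"
    by (simp_all add: pres_class_mult pres_monoid_one flip: pres_class_eq_iff)
  have "foldl reduce_snoc (normal_form u) v = []"
    using uv by (simp add: pi2_cong_iff_normal_form normal_form_append)
  then have "prefix_product (normal_form u)" by (rule prefix_product_if_foldl_reduce_snoc_Nil)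
  moreover have "(mirror u @ mirror v, []) \<in> pi2_cong" using pi2_cong_mirror[OF vu] by simp
  then have "foldl reduce_snoc (normal_form (mirror u)) (mirror v) = []"
    by (simp add: pi2_cong_iff_normal_form normal_form_append)
  then have "prefix_product (mirror (normal_form u))"
    by (simp add: prefix_product_if_foldl_reduce_snoc_Nil flip: normal_form_mirror)
  then have "suffix_product (normal_form u)" using suffix_product_mirror by fastforce
  ultimately show ?thesis using X involution_product_if_prefix_suffix by simp
qed

lemma ab_pow_c_unit: "1 \<le> N \<Longrightarrow> pi2_class (ab_pow_c N) \<in> Units Pi2"
  using relator_cancel[of N "[]" "[]"] unfolding Units_def
  by (auto simp: carrier_pres_monoid pres_class_mult pres_monoid_one pres_class_eq_iff relator_def)

lemma reduced_ab_pow_c: "reduced (ab_pow_c N)"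
  unfolding reduced_def
proof clarify
  fix p q j assume "ab_pow_c N = p @ relator j @ q"
  then have "length (filter ((=) a) (ab_pow_c N)) = length (filter ((=) a) (p @ relator j @ q))"
    by simp
  then show False by (simp add: ab_pow_c_def relator_def)
qed

lemma generate_units_involution_product:
  assumes F: "F \<subseteq> carrier (units_of Pi2)"
    and bound: "\<forall>X \<in> F \<union> m_inv (units_of Pi2) ` F. involution_product L (class_normal_form X)"
    and X: "X \<in> generate (units_of Pi2) F"
  shows "involution_product L (class_normal_form X)"
  using X
proof (induction rule: generate.induct)
  case one
  then show ?case by (simp add: units_of_one pres_monoid_one involution_Nil)
next
  case (eng h1 h2)
  interpret units: group "units_of Pi2" by (rule monoid.units_group[OF monoid_pres_monoid])
  have "h1 \<in> Units Pi2" "h2 \<in> Units Pi2"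
    using eng.hyps units.generate_in_carrier[OF F] by (auto simp: units_of_carrier)
  then show ?case
    using eng.IH involution_product_foldl_reduce_snoc reduced_normal_form
    by (auto simp: units_of_mult class_normal_form_mult carrier_pres_monoid Units_def)
qed (use bound in auto)

theorem units_Pi2_not_finitely_generated:
  "\<not> (\<exists>F. finite F \<and> F \<subseteq> carrier (units_of Pi2) \<and>
      generate (units_of Pi2) F = carrier (units_of Pi2))"
proof
  assume "\<exists>F. finite F \<and> F \<subseteq> carrier (units_of Pi2) \<and>
    generate (units_of Pi2) F = carrier (units_of Pi2)"
  then obtain F where fin: "finite F" and F: "F \<subseteq> carrier (units_of Pi2)"
    and gen: "generate (units_of Pi2) F = carrier (units_of Pi2)" by blast
  interpret units: group "units_of Pi2" by (rule monoid.units_group[OF monoid_pres_monoid])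
  define S where "S = F \<union> m_inv (units_of Pi2) ` F"
  have "S \<subseteq> Units Pi2"
    using F units.inv_closed unfolding S_def by (auto simp: units_of_carrier)
  then have "\<forall>X \<in> S. \<exists>L. involution_product L (class_normal_form X)"
    using unit_normal_form_involution_product by blast
  then obtain Lf where "\<forall>X \<in> S. involution_product (Lf X) (class_normal_form X)" by metis
  moreover have "finite S" using fin by (simp add: S_def)
  ultimately have "\<forall>X \<in> S. involution_product (Max (Lf ` S)) (class_normal_form X)"
    using involution_product_mono by (meson Max_ge finite_imageI imageI)
  then have bounded: "involution_product (Max (Lf ` S)) (class_normal_form X)"
    if "X \<in> carrier (units_of Pi2)" for X
    using generate_units_involution_product[OF F] that gen unfolding S_def by blast
  define N where "N = Suc (Max (Lf ` S))"
  have "pi2_class (ab_pow_c N) \<in> carrier (units_of Pi2)"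
    using ab_pow_c_unit by (simp add: N_def units_of_carrier)
  then have "involution_product (Max (Lf ` S)) (ab_pow_c N)"
    using bounded normal_form_reduced[OF reduced_ab_pow_c] by fastforce
  then show False using involution_product_ab_pow_c_le by (fastforce simp: N_def)
qed

theorem mainTheorem10:
  shows "context_free (word_problem Pi2_rels) \<and>
    \<not> (\<exists>F. finite F \<and> F \<subseteq> carrier (units_of (pres_monoid Pi2_rels)) \<and>
          generate (units_of (pres_monoid Pi2_rels)) F = carrier (units_of (pres_monoid Pi2_rels)))"
  using context_free_word_problem_Pi2 units_Pi2_not_finitely_generated by blast

end
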